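(* Let $R$ be a regular ring with unity, and let $e,f$ be idempotents of $R$. Then $f(1-e)=f$ if and only if $M(f,e)=\{0\}$.
   Context: A ring is regular if for every $x$ there is $y$ with $xyx=x$. For idempotents $a,b$ of $R$, $M(a,b)=\{g \text{ idempotent in } R: ga=g \text{ and } bg=g\}$. (The condition $f(1-e)=f$ is the relation $f\,\omega^l\,(1-e)$.) *)

theory Defs
  imports Main
begin

definition regular_ring :: "'a::ring_1 itself \<Rightarrow> bool" where
  "regular_ring _ \<longleftrightarrow> (\<forall>x::'a. \<exists>y. x * y * x = x)"

definition idempotent :: "'a::ring_1 \<Rightarrow> bool" where
  "idempotent g \<longleftrightarrow> g * g = g"

definition M :: "'a::ring_1 \<Rightarrow> 'a \<Rightarrow> 'a set" where
  "M a b = {g. idempotent g \<and> g * a = g \<and> b * g = g}"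

end

theory Submission
  imports Defs
begin

text \<open>Both sides say that f e = 0. If f e = 0, every g \<in> M(f,e) satisfies
  g = (g f)(e g) = g (f e) g = 0. Conversely, regularity gives a reflexive inverse z of
  x = f e, and g = e z f is an idempotent in M(f,e) with f g e = x z x = x; so M(f,e) = {0}
  forces x = 0.\<close>

lemma mult_one_minus_eq_self_iff:
  fixes e f :: "'a::ring_1"
  shows "f * (1 - e) = f \<longleftrightarrow> f * e = 0"
  by (simp add: right_diff_distrib)

lemma M_eq_zero_if_mult_eq_zero:
  fixes e f :: "'a::ring_1"
  assumes "f * e = 0"
  shows "M f e = {0}"
proof
  show "M f e \<subseteq> {0}"
  proof
    fix g assume "g \<in> M f e"
    hence g: "g * g = g" "g * f = g" "e * g = g" by (auto simp: M_def idempotent_def)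
    have "g = (g * f) * (e * g)" using g by simp
    also have "\<dots> = g * (f * e) * g" by (simp add: mult.assoc)
    finally show "g \<in> {0}" using assms by simp
  qed
  show "{0} \<subseteq> M f e" by (simp add: M_def idempotent_def)
qed

lemma regular_ring_reflexive_inverse:
  fixes x :: "'a::ring_1"
  assumes "regular_ring TYPE('a)"
  obtains z where "x * z * x = x" and "z * x * z = z"
proof -
  obtain y where y: "x * y * x = x" using assms unfolding regular_ring_def by blast
  define z where "z = y * x * y"
  have "x * z * x = x" unfolding z_def using y by (simp add: mult.assoc)
  moreover have "z * x * z = z"
  proof -
    have "z * x * z = y * (x * y * x) * y * x * y" unfolding z_def by (simp add: mult.assoc)
    also have "\<dots> = y * (x * y * x) * y" using y by (simp add: mult.assoc)
    also have "\<dots> = z" unfolding z_def using y by simp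
    finally show ?thesis .
  qed
  ultimately show ?thesis by (rule that)
qed

lemma idempotent_in_M_from_reflexive_inverse:
  fixes e f z :: "'a::ring_1"
  assumes "idempotent e" and "idempotent f"
    and "z * (f * e) * z = z"
  shows "e * z * f \<in> M f e"
proof -
  have ee: "e * e = e" and ff: "f * f = f" using assms(1,2) by (auto simp: idempotent_def)
  have "(e * z * f) * (e * z * f) = e * (z * (f * e) * z) * f" by (simp add: mult.assoc)
  hence "idempotent (e * z * f)" using assms(3) by (simp add: idempotent_def)
  moreover have "e * z * f * f = e * z * f" using ff by (simp add: mult.assoc)
  moreover have "e * (e * z * f) = e * z * f" using ee by (simp flip: mult.assoc)
  ultimately show ?thesis by (simp add: M_def)
qed

lemma mult_eq_zero_if_M_eq_zero:
  fixes e f :: "'a::ring_1"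
  assumes "regular_ring TYPE('a)" and "idempotent e" and "idempotent f"
    and "M f e = {0}"
  shows "f * e = 0"
proof -
  obtain z where xzx: "(f * e) * z * (f * e) = f * e" and zxz: "z * (f * e) * z = z"
    using regular_ring_reflexive_inverse[OF assms(1)] .
  have "e * z * f \<in> M f e"
    using idempotent_in_M_from_reflexive_inverse[OF assms(2,3) zxz] .
  hence "e * z * f = 0" using assms(4) by simp
  hence "f * (e * z * f) * e = 0" by simp
  moreover have "f * (e * z * f) * e = f * e" using xzx by (simp add: mult.assoc)
  ultimately show ?thesis by simp
qed

theorem corollary2p3:
  fixes e f :: "'a::ring_1"
  assumes "regular_ring TYPE('a)"
    and "idempotent e" and "idempotent f"
  shows "f * (1 - e) = f \<longleftrightarrow> M f e = {0}"
  using M_eq_zero_if_mult_eq_zero mult_eq_zero_if_M_eq_zero[OF assms]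
  unfolding mult_one_minus_eq_self_iff by blast

end
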